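(* Let $m\ge1$, $n\ge1$ and $t=\lfloor\frac{n-1}{3}\rfloor$. Then the Multidimensional Graded Consensus protocol MGC (described in the context) is an $m$-dimensional $(n,t)$-graded consensus protocol.
   Context: Network model: $n$ players, set of players common knowledge; every pair joined by a direct private channel; synchronous steps, instantaneous delivery; at most $t$ players malicious (arbitrary behaviour), honest players follow the protocol and send the same message to everyone. For player $i$, step $s$, component $c$ and value $v$, $\#_i^s(v,c)$ is the number of distinct players from which $i$ received in step $s$ a valid vector message whose $c$-th component is $v$ (counting its own); conflicting messages from one sender in a step are both discarded, duplicates count once. Definition: a protocol in which each player $i$ privately knows an initial vector $\mathbf{v}_i'=(v'_{i,1},\dots,v'_{i,m})$ with $v'_{i,c}\in V\cup\{\bot\}$ ($\bot\notin V$) is an $m$-dimensional $(n,t)$-graded consensus protocol if in every execution with $n$ players of which at most $t$ are malicious, every honest $i$ halts outputting $((v_{i,1},g_{i,1}),\dots,(v_{i,m},g_{i,m}))$ with $g_{i,c}\in\{0,1,2\}$, $v_{i,c}\in V\cup\{\bot\}$, such that: (1) for all honest $i,j$ and all $c$, $|g_{i,c}-g_{j,c}|\le1$; (2) for all honest $i,j$ and all $c$ with $g_{i,c},g_{j,c}>0$, $v_{i,c}=v_{j,c}\neq\bot$; (3) if $v'_{1,c}=\dots=v'_{n,c}=v_c$ for some $v_c\in V\cup\{\bot\}$, then every honest $i$ outputs $(v_{i,c},g_{i,c})=(v_c,2)$ if $v_c\ne\bot$ and $(\bot,0)$ if $v_c=\bot$. Protocol MGC: STEP 1: each player $i$ sends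 $\mathbf{v}_i'$ to all players. STEP 2: each $i$ sends to all the vector $\tilde{\mathbf{v}}_i$ with $\tilde v_{i,c}=v$ if $\#_i^1(v,c)\ge\lfloor\frac{2n}{3}\rfloor+1$, and $\tilde v_{i,c}=\bot$ otherwise. OUTPUT: for each $c$, if for some $x\neq\bot$, $\#_i^2(x,c)\ge\lfloor\frac{2n}{3}\rfloor+1$ then $(v_{i,c},g_{i,c})=(x,2)$; else if for some $x\ne\bot$, $\#_i^2(x,c)\ge\lfloor\frac n3\rfloor+1$ then $(v_{i,c},g_{i,c})=(x,1)$; else $(v_{i,c},g_{i,c})=(\bot,0)$. *)

theory Defs
  imports Main
begin

text \<open>Players are 0,...,n-1; components are 0,...,m-1.  Values of V are
elements of the type 'v, and the special symbol bot is None.\<close>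

type_synonym 'v vec = "nat \<Rightarrow> 'v option"

text \<open>Effective messages received in one step: inbox i j is the vector message
that recipient i accepts from sender j in that step (None if j sent nothing valid,
or sent conflicting messages, which are discarded).\<close>
type_synonym 'v inbox = "nat \<Rightarrow> nat \<Rightarrow> 'v vec option"

definition cnt :: "nat \<Rightarrow> 'v inbox \<Rightarrow> nat \<Rightarrow> nat \<Rightarrow> 'v option \<Rightarrow> nat" where
  "cnt n r i c v = card {j \<in> {0..<n}. \<exists>w. r i j = Some w \<and> w c = v}"

definition step_inbox :: "nat set \<Rightarrow> (nat \<Rightarrow> 'v vec) \<Rightarrow> 'v inbox \<Rightarrow> 'v inbox" where
  "step_inbox B msg adv = (\<lambda>i j. if j \<in> B then adv i j else Some (msg j))"

definition mgc_tilde :: "nat \<Rightarrow> 'v inbox \<Rightarrow> nat \<Rightarrow> 'v vec" where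
  "mgc_tilde n r1 i = (\<lambda>c.
     if \<exists>v. cnt n r1 i c v \<ge> (2 * n) div 3 + 1
     then (SOME v. cnt n r1 i c v \<ge> (2 * n) div 3 + 1) else None)"

definition mgc_output :: "nat \<Rightarrow> 'v inbox \<Rightarrow> nat \<Rightarrow> nat \<Rightarrow> 'v option \<times> nat" where
  "mgc_output n r2 i c =
     (if \<exists>x. x \<noteq> None \<and> cnt n r2 i c x \<ge> (2 * n) div 3 + 1
      then (SOME x. x \<noteq> None \<and> cnt n r2 i c x \<ge> (2 * n) div 3 + 1, 2)
      else if \<exists>x. x \<noteq> None \<and> cnt n r2 i c x \<ge> n div 3 + 1
      then (SOME x. x \<noteq> None \<and> cnt n r2 i c x \<ge> n div 3 + 1, 1)
      else (None, 0))"

text \<open>Execution of MGC: malicious set B, initial vectors v', adversarial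
messages adv1 (step 1) and adv2 (step 2, arbitrary, hence may depend on anything).\<close>
definition mgc_run :: "nat \<Rightarrow> nat set \<Rightarrow> (nat \<Rightarrow> 'v vec) \<Rightarrow> 'v inbox \<Rightarrow> 'v inbox
                       \<Rightarrow> nat \<Rightarrow> nat \<Rightarrow> 'v option \<times> nat" where
  "mgc_run n B v' adv1 adv2 =
     (let r1 = step_inbox B v' adv1;
          r2 = step_inbox B (mgc_tilde n r1) adv2
      in mgc_output n r2)"

definition graded_consensus_outcome ::
  "nat \<Rightarrow> nat \<Rightarrow> nat set \<Rightarrow> (nat \<Rightarrow> 'v vec) \<Rightarrow> (nat \<Rightarrow> nat \<Rightarrow> 'v option \<times> nat) \<Rightarrow> bool" where
  "graded_consensus_outcome n m B v' out \<longleftrightarrow>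
     (let H = {0..<n} - B in
       (\<forall>i\<in>H. \<forall>c<m. snd (out i c) \<in> {0, 1, 2}) \<and>
       (\<forall>i\<in>H. \<forall>j\<in>H. \<forall>c<m. snd (out i c) \<le> snd (out j c) + 1) \<and>
       (\<forall>i\<in>H. \<forall>j\<in>H. \<forall>c<m. snd (out i c) > 0 \<and> snd (out j c) > 0 \<longrightarrow>
            fst (out i c) = fst (out j c) \<and> fst (out i c) \<noteq> None) \<and>
       (\<forall>c<m. \<forall>vc. (\<forall>i<n. v' i c = vc) \<longrightarrow>
            (\<forall>i\<in>H. out i c = (if vc \<noteq> None then (vc, 2) else (None, 0)))))"

definition MGC_is_graded_consensus :: "nat \<Rightarrow> nat \<Rightarrow> nat \<Rightarrow> bool" where
  "MGC_is_graded_consensus m n t \<longleftrightarrow>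
     (\<forall>(B::nat set) (v'::nat \<Rightarrow> 'v vec) adv1 adv2.
        B \<subseteq> {0..<n} \<and> card B \<le> t \<longrightarrow>
        graded_consensus_outcome n m B v' (mgc_run n B v' adv1 adv2))"

end

theory Submission
  imports Defs
begin

(* Let b < n/3 be the number of malicious players.  In either step, the count of a value
   at a player exceeds its number of honest senders by at most b.  Hence the counts of a
   value at two players differ by at most b; counts of at least 2n/3 + 1 for two
   different values would need more than n + b senders; and a count of at least n/3 + 1
   includes an honest sender.  The first fact turns grade 2 at one honest player into a
   count of at least n/3 + 1, i.e. a positive grade, at every other.  By the second, the
   non-bot STEP 2 values of honest players agree, and by the third every value output
   with positive grade is one of them.  Unanimous inputs are echoed by all
   n - b >= 2n/3 + 1 honest players in both steps. *)

lemma card_filter_eq_add_le: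
  assumes "finite A" and "v \<noteq> w"
  shows "card {k \<in> A. f k = v} + card {k \<in> A. f k = w} \<le> card A"
proof -
  have "card {k \<in> A. f k = v} + card {k \<in> A. f k = w}
      = card ({k \<in> A. f k = v} \<union> {k \<in> A. f k = w})"
    using assms by (intro card_Un_disjoint [symmetric]) auto
  also have "\<dots> \<le> card A"
    using assms(1) by (intro card_mono) auto
  finally show ?thesis .
qed

lemma cnt_add_cnt_le:
  assumes "v \<noteq> w"
  shows "cnt n r i c v + cnt n r i c w \<le> n"
  using card_filter_eq_add_le [of "{0..<n}" "Some v" "Some w" "\<lambda>j. map_option (\<lambda>u. u c) (r i j)"]
    assms by (simp add: cnt_def)

lemma cnt_majority_unique:
  assumes "n < 2 * a" and "a \<le> cnt n r i c v" and "a \<le> cnt n r i c w"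
  shows "v = w"
  using cnt_add_cnt_le [of v w n r i c] assms by linarith

lemma mgc_tilde_Some_cnt:
  assumes "mgc_tilde n r i c = Some u"
  shows "(2 * n) div 3 + 1 \<le> cnt n r i c (Some u)"
proof -
  have ex: "\<exists>v. (2 * n) div 3 + 1 \<le> cnt n r i c v"
    using assms unfolding mgc_tilde_def by (auto split: if_splits)
  have "mgc_tilde n r i c = (SOME v. (2 * n) div 3 + 1 \<le> cnt n r i c v)"
    unfolding mgc_tilde_def if_P [OF ex] ..
  with someI_ex [OF ex] assms show ?thesis
    by simp
qed

lemma mgc_tilde_eqI:
  assumes "(2 * n) div 3 + 1 \<le> cnt n r i c v"
  shows "mgc_tilde n r i c = v"
proof -
  have ex: "\<exists>v. (2 * n) div 3 + 1 \<le> cnt n r i c v"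
    using assms by blast
  have "n < 2 * ((2 * n) div 3 + 1)"
    by presburger
  with someI_ex [OF ex] assms show ?thesis
    unfolding mgc_tilde_def if_P [OF ex] by (blast intro: cnt_majority_unique)
qed

lemma mgc_output_grade: "snd (mgc_output n r i c) \<in> {0, 1, 2}"
  unfolding mgc_output_def by auto

lemma mgc_output_grade_2_cnt:
  assumes "snd (mgc_output n r i c) = 2"
  shows "(2 * n) div 3 + 1 \<le> cnt n r i c (fst (mgc_output n r i c))"
proof -
  have ex: "\<exists>x. x \<noteq> None \<and> (2 * n) div 3 + 1 \<le> cnt n r i c x"
    using assms unfolding mgc_output_def by (auto split: if_splits)
  show ?thesis
    unfolding mgc_output_def if_P [OF ex] fst_conv using someI_ex [OF ex] by (rule conjunct2)
qed

lemma mgc_output_pos_cnt: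
  assumes "0 < snd (mgc_output n r i c)"
  shows "fst (mgc_output n r i c) \<noteq> None \<and> n div 3 + 1 \<le> cnt n r i c (fst (mgc_output n r i c))"
proof (cases "\<exists>x. x \<noteq> None \<and> (2 * n) div 3 + 1 \<le> cnt n r i c x")
  case ex2: True
  have "n div 3 \<le> (2 * n) div 3"
    by presburger
  with someI_ex [OF ex2] show ?thesis
    unfolding mgc_output_def if_P [OF ex2] fst_conv by linarith
next
  case not_ex2: False
  have ex1: "\<exists>x. x \<noteq> None \<and> n div 3 + 1 \<le> cnt n r i c x"
    using assms unfolding mgc_output_def if_not_P [OF not_ex2] by (auto split: if_splits)
  show ?thesis
    unfolding mgc_output_def if_not_P [OF not_ex2] if_P [OF ex1] fst_conv by (rule someI_ex [OF ex1])
qed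

lemma mgc_output_posI:
  assumes "x \<noteq> None" and "n div 3 + 1 \<le> cnt n r i c x"
  shows "0 < snd (mgc_output n r i c)"
  using assms unfolding mgc_output_def by auto

lemma mgc_output_eq_grade_2:
  assumes "x \<noteq> None" and "(2 * n) div 3 + 1 \<le> cnt n r i c x"
  shows "mgc_output n r i c = (x, 2)"
proof -
  have ex: "\<exists>x. x \<noteq> None \<and> (2 * n) div 3 + 1 \<le> cnt n r i c x"
    using assms by blast
  have "n < 2 * ((2 * n) div 3 + 1)"
    by presburger
  then have "(SOME x. x \<noteq> None \<and> (2 * n) div 3 + 1 \<le> cnt n r i c x) = x"
    using someI_ex [OF ex] assms(2) by (blast intro: cnt_majority_unique)
  then show ?thesis
    unfolding mgc_output_def if_P [OF ex] by simp
qed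

lemma mgc_output_eq_grade_0:
  assumes "\<And>x. x \<noteq> None \<Longrightarrow> cnt n r i c x \<le> n div 3"
  shows "mgc_output n r i c = (None, 0)"
proof -
  have "n div 3 \<le> (2 * n) div 3"
    by presburger
  then have "\<not> (\<exists>x. x \<noteq> None \<and> (2 * n) div 3 + 1 \<le> cnt n r i c x)"
    and "\<not> (\<exists>x. x \<noteq> None \<and> n div 3 + 1 \<le> cnt n r i c x)"
    by (auto dest!: assms)
  then show ?thesis
    unfolding mgc_output_def by simp
qed

locale byzantine_minority =
  fixes n :: nat and B :: "nat set"
  assumes malicious_subset: "B \<subseteq> {0..<n}"
    and malicious_lt_third: "3 * card B < n"
begin

abbreviation honest :: "nat set" where
  "honest \<equiv> {0..<n} - B"

lemma card_honest: "card honest = n - card B"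
  using malicious_subset by (simp add: card_Diff_subset finite_subset)

lemma malicious_le_third: "card B \<le> n div 3"
  using malicious_lt_third by presburger

lemma quorum_le_honest: "(2 * n) div 3 + 1 \<le> n - card B"
  using malicious_lt_third by presburger

lemma card_honest_le_cnt:
  "card {k \<in> honest. msg k c = v} \<le> cnt n (step_inbox B msg adv) i c v"
  unfolding cnt_def by (rule card_mono) (auto simp: step_inbox_def)

lemma cnt_le_card_honest_add:
  "cnt n (step_inbox B msg adv) i c v \<le> card {k \<in> honest. msg k c = v} + card B"
proof -
  have "cnt n (step_inbox B msg adv) i c v \<le> card ({k \<in> honest. msg k c = v} \<union> B)"
    unfolding cnt_def using malicious_subset
    by (intro card_mono) (auto simp: step_inbox_def finite_subset)
  also have "\<dots> \<le> card {k \<in> honest. msg k c = v} + card B"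
    by (rule card_Un_le)
  finally show ?thesis .
qed

lemma cnt_step_inbox_le:
  "cnt n (step_inbox B msg adv) i c v \<le> cnt n (step_inbox B msg adv) j c v + card B"
  using cnt_le_card_honest_add [of msg adv i c v] card_honest_le_cnt [of msg c v adv j]
  by linarith

lemma cnt_add_cnt_step_inbox_le:
  assumes "v \<noteq> w"
  shows "cnt n (step_inbox B msg adv) i c v + cnt n (step_inbox B msg adv) j c w \<le> n + card B"
proof -
  have "card {k \<in> honest. msg k c = v} + card {k \<in> honest. msg k c = w} \<le> card honest"
    using assms by (intro card_filter_eq_add_le) auto
  with card_honest malicious_lt_third
    cnt_le_card_honest_add [of msg adv i c v] cnt_le_card_honest_add [of msg adv j c w]
  show ?thesis
    by linarith
qed

lemma honest_sender_if_cnt_gt: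
  assumes "card B < cnt n (step_inbox B msg adv) i c v"
  shows "\<exists>k \<in> honest. msg k c = v"
proof -
  have "card {k \<in> honest. msg k c = v} \<noteq> 0"
    using assms cnt_le_card_honest_add [of msg adv i c v] by linarith
  then show ?thesis
    by (metis (mono_tags, lifting) card.empty empty_Collect_eq)
qed

lemma quorum_le_cnt_unanimous:
  assumes "\<And>k. k \<in> honest \<Longrightarrow> msg k c = v"
  shows "(2 * n) div 3 + 1 \<le> cnt n (step_inbox B msg adv) i c v"
proof -
  have "{k \<in> honest. msg k c = v} = honest"
    using assms by blast
  with card_honest_le_cnt [of msg c v adv i] quorum_le_honest show ?thesis
    by (simp add: card_honest)
qed

lemma mgc_tilde_agree:
  assumes "mgc_tilde n (step_inbox B msg adv) i c = Some u"
    and "mgc_tilde n (step_inbox B msg adv) j c = Some w"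
  shows "u = w"
proof (rule ccontr)
  assume "u \<noteq> w"
  then have "cnt n (step_inbox B msg adv) i c (Some u) + cnt n (step_inbox B msg adv) j c (Some w)
      \<le> n + card B"
    by (intro cnt_add_cnt_step_inbox_le) simp
  moreover have "n + card B < 2 * ((2 * n) div 3) + 2"
    using malicious_lt_third by presburger
  ultimately show False
    using mgc_tilde_Some_cnt [OF assms(1)] mgc_tilde_Some_cnt [OF assms(2)] by linarith
qed

lemma mgc_output_grade_le_Suc:
  "snd (mgc_output n (step_inbox B msg adv) i c)
     \<le> snd (mgc_output n (step_inbox B msg adv) j c) + 1"
proof (cases "snd (mgc_output n (step_inbox B msg adv) i c) = 2")
  case True
  let ?x = "fst (mgc_output n (step_inbox B msg adv) i c)"
  have "n div 3 + 1 + card B \<le> (2 * n) div 3 + 1"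
    using malicious_lt_third by presburger
  with mgc_output_grade_2_cnt [OF True] cnt_step_inbox_le [of msg adv i c ?x j]
  have "n div 3 + 1 \<le> cnt n (step_inbox B msg adv) j c ?x"
    by linarith
  moreover have "?x \<noteq> None"
    using mgc_output_pos_cnt [of n "step_inbox B msg adv" i c] True by simp
  ultimately have "0 < snd (mgc_output n (step_inbox B msg adv) j c)"
    by (intro mgc_output_posI)
  with True show ?thesis
    by simp
next
  case False
  with mgc_output_grade [of n "step_inbox B msg adv" i c] show ?thesis
    by auto
qed

lemma mgc_output_pos_honest_sender:
  assumes "0 < snd (mgc_output n (step_inbox B msg adv) i c)"
  shows "\<exists>u. fst (mgc_output n (step_inbox B msg adv) i c) = Some u \<and> (\<exists>k \<in> honest. msg k c = Some u)"
proof -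
  obtain u where u: "fst (mgc_output n (step_inbox B msg adv) i c) = Some u"
    and "n div 3 + 1 \<le> cnt n (step_inbox B msg adv) i c (Some u)"
    using mgc_output_pos_cnt [OF assms] by auto
  with malicious_le_third have "card B < cnt n (step_inbox B msg adv) i c (Some u)"
    by linarith
  with u show ?thesis
    by (blast dest: honest_sender_if_cnt_gt)
qed

lemma mgc_output_agree:
  assumes agree: "\<And>k k' u w. k \<in> honest \<Longrightarrow> k' \<in> honest \<Longrightarrow>
      msg k c = Some u \<Longrightarrow> msg k' c = Some w \<Longrightarrow> u = w"
    and "0 < snd (mgc_output n (step_inbox B msg adv) i c)"
    and "0 < snd (mgc_output n (step_inbox B msg adv) j c)"
  shows "fst (mgc_output n (step_inbox B msg adv) i c) = fst (mgc_output n (step_inbox B msg adv) j c)"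
proof -
  obtain u k where "fst (mgc_output n (step_inbox B msg adv) i c) = Some u"
    and "k \<in> honest" and "msg k c = Some u"
    using mgc_output_pos_honest_sender [OF assms(2)] by blast
  moreover obtain w k' where "fst (mgc_output n (step_inbox B msg adv) j c) = Some w"
    and "k' \<in> honest" and "msg k' c = Some w"
    using mgc_output_pos_honest_sender [OF assms(3)] by blast
  ultimately show ?thesis
    using agree [of k k' u w] by simp
qed

lemma mgc_tilde_unanimous:
  assumes "\<And>k. k \<in> honest \<Longrightarrow> msg k c = v"
  shows "mgc_tilde n (step_inbox B msg adv) i c = v"
  using assms by (intro mgc_tilde_eqI quorum_le_cnt_unanimous)

lemma mgc_output_unanimous:
  assumes "\<And>k. k \<in> honest \<Longrightarrow> msg k c = v"
  shows "mgc_output n (step_inbox B msg adv) i c = (if v \<noteq> None then (v, 2) else (None, 0))"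
proof (cases "v = None")
  case False
  have "(2 * n) div 3 + 1 \<le> cnt n (step_inbox B msg adv) i c v"
    using assms by (rule quorum_le_cnt_unanimous)
  with False show ?thesis
    by (simp add: mgc_output_eq_grade_2)
next
  case True
  have "cnt n (step_inbox B msg adv) i c x \<le> n div 3" if "x \<noteq> None" for x
  proof -
    have "card {k \<in> honest. msg k c = x} = 0"
      using assms True that by auto
    with malicious_le_third cnt_le_card_honest_add [of msg adv i c x] show ?thesis
      by linarith
  qed
  then have "mgc_output n (step_inbox B msg adv) i c = (None, 0)"
    by (rule mgc_output_eq_grade_0)
  with True show ?thesis
    by simp
qed

end

theorem theorem2:
  fixes m n :: nat
  assumes "m \<ge> 1" and "n \<ge> 1"
  shows "MGC_is_graded_consensus TYPE('v) m n ((n - 1) div 3)"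
  unfolding MGC_is_graded_consensus_def
proof (intro allI impI, elim conjE)
  fix B :: "nat set" and v' :: "nat \<Rightarrow> 'v vec" and adv1 adv2
  assume "B \<subseteq> {0..<n}" and "card B \<le> (n - 1) div 3"
  moreover from this(2) assms(2) have "3 * card B < n"
    by presburger
  ultimately interpret byzantine_minority n B
    by unfold_locales
  define T where "T = mgc_tilde n (step_inbox B v' adv1)"
  define out where "out = mgc_output n (step_inbox B T adv2)"
  have T_agree: "u = w"
    if "k \<in> honest" and "k' \<in> honest" and "T k c = Some u" and "T k' c = Some w" for k k' c u w
    using that(3,4) unfolding T_def by (rule mgc_tilde_agree)
  have run: "mgc_run n B v' adv1 adv2 = out"
    unfolding mgc_run_def out_def T_def Let_def ..
  show "graded_consensus_outcome n m B v' (mgc_run n B v' adv1 adv2)"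
    unfolding graded_consensus_outcome_def Let_def run
  proof (intro conjI ballI allI impI)
    fix i c
    show "snd (out i c) \<in> {0, 1, 2}"
      unfolding out_def by (rule mgc_output_grade)
  next
    fix i j c
    show "snd (out i c) \<le> snd (out j c) + 1"
      unfolding out_def by (rule mgc_output_grade_le_Suc)
  next
    fix i j c
    assume "0 < snd (out i c) \<and> 0 < snd (out j c)"
    then show "fst (out i c) = fst (out j c)"
      unfolding out_def by (elim conjE) (rule mgc_output_agree [OF T_agree])
  next
    fix i j c
    assume "0 < snd (out i c) \<and> 0 < snd (out j c)"
    then show "fst (out i c) \<noteq> None"
      unfolding out_def using mgc_output_pos_cnt by blast
  next
    fix c vc i
    assume "\<forall>i<n. v' i c = vc"
    then have "T k c = vc" if "k \<in> honest" for k
      unfolding T_def using that by (intro mgc_tilde_unanimous) auto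
    then show "out i c = (if vc \<noteq> None then (vc, 2) else (None, 0))"
      unfolding out_def by (rule mgc_output_unanimous)
  qed
qed

end
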